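(* There is a constant $c>0$ such that for all integers $n,m$ with $1\le m<n$ there is an instance $(\mathcal{I},\mathcal{T},p^0)$ of the Shape Reconfiguration Problem with $|\mathcal{I}|=|\mathcal{T}|=n$ and $|\mathcal{I}\setminus\mathcal{T}|=m$ (with both $\mathcal{I}$ and $\mathcal{T}$ simply connected) such that every valid sequence of legal agent actions solving it has length at least $c\,mn$. Concretely, one may take $\mathcal{I}=\{v_1,\dots,v_n\}$ and $\mathcal{T}=\{v_{m+1},\dots,v_{n+m}\}$ where $v_{i+1}=v_i+(0,2)$ (a straight line of nodes), with $p^0=v_n$.
   Context: Hybrid model. Let $G=(V,E)$ be the infinite triangular lattice with $V=\{(x,y)\in\mathbb{Z}^2 : x+y \text{ even}\}$, where the six neighbors of a node $v$ are $v+\vec d$ for $\vec d\in\{(0,-2),(1,-1),(1,1),(0,2),(-1,1),(-1,-1)\}$. A set $S\subseteq V$ is connected if $G[S]$ is connected, and simply connected if $V\setminus S$ is connected. A single agent and finitely many indistinguishable tiles occupy nodes; each node holds at most one tile; the agent occupies one node and carries at most one tile. A configuration $(\mathcal{C},p)$ ($\mathcal{C}$ = tiled nodes, $p$ = agent node) is connected if $\mathcal{C}$ is connected, or if the agent carries a tile and $\mathcal{C}\cup\{p\}$ is connected. In each time step the agent performs one action: move to an adjacent node, lift the tile at its node (if not carrying one), or place its carried tile at its node (if untiled); every resulting configuration must be connected. Shape Reconfiguration Problem: given connected $\mathcal{I},\mathcal{T}\subseteq V$ with $|\mathcal{I}|=|\mathcal{T}|=n$, $\mathcal{I}\cap\mathcal{T}$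 non-empty and connected, and $p^0\in\mathcal{I}$ (initial tiled set $\mathcal{I}$, agent not carrying a tile), a solution is a sequence of connected configurations, each obtained from the previous by one legal action, ending with tiled set exactly $\mathcal{T}$; its length is the number of actions. *)

theory Defs
  imports Complex_Main
begin

type_synonym node = "int \<times> int"

text \<open>Nodes of the infinite triangular lattice.\<close>
definition lattice_nodes :: "node set" where
  "lattice_nodes = {(x, y). even (x + y)}"

definition directions :: "node set" where
  "directions = {(0, -2), (1, -1), (1, 1), (0, 2), (-1, 1), (-1, -1)}"

definition adj :: "node \<Rightarrow> node \<Rightarrow> bool" where
  "adj u v \<longleftrightarrow> u \<in> lattice_nodes \<and>
     (\<exists>(dx, dy) \<in> directions. v = (fst u + dx, snd u + dy))"

definition walk_in :: "node set \<Rightarrow> node list \<Rightarrow> bool" where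
  "walk_in S ps \<longleftrightarrow> ps \<noteq> [] \<and> set ps \<subseteq> S \<and>
     (\<forall>i. Suc i < length ps \<longrightarrow> adj (ps ! i) (ps ! Suc i))"

definition conn_set :: "node set \<Rightarrow> bool" where
  "conn_set S \<longleftrightarrow> S \<subseteq> lattice_nodes \<and>
     (\<forall>u \<in> S. \<forall>v \<in> S. \<exists>ps. walk_in S ps \<and> hd ps = u \<and> last ps = v)"

definition simply_conn :: "node set \<Rightarrow> bool" where
  "simply_conn S \<longleftrightarrow> conn_set (lattice_nodes - S)"

text \<open>Configurations: (tiled nodes, agent position, agent carries a tile).\<close>
type_synonym config = "node set \<times> node \<times> bool"

definition conf_connected :: "config \<Rightarrow> bool" where
  "conf_connected c = (case c of (C, p, b) \<Rightarrow>
     conn_set C \<or> (b \<and> conn_set (insert p C)))"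

definition step :: "config \<Rightarrow> config \<Rightarrow> bool" where
  "step c c' = (case c of (C, p, b) \<Rightarrow> case c' of (C', p', b') \<Rightarrow>
       (C' = C \<and> b' = b \<and> adj p p')
     \<or> (p' = p \<and> p \<in> C \<and> \<not> b \<and> C' = C - {p} \<and> b')
     \<or> (p' = p \<and> p \<notin> C \<and> b \<and> C' = insert p C \<and> \<not> b'))"

definition valid_instance :: "node set \<Rightarrow> node set \<Rightarrow> node \<Rightarrow> bool" where
  "valid_instance I T p0 \<longleftrightarrow> finite I \<and> finite T \<and> card I = card T \<and>
     conn_set I \<and> conn_set T \<and> I \<inter> T \<noteq> {} \<and> conn_set (I \<inter> T) \<and> p0 \<in> I"

text \<open>Its length (number of actions) is length cs - 1.\<close>
definition is_solution :: "node set \<Rightarrow> node set \<Rightarrow> node \<Rightarrow> config list \<Rightarrow> bool" where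
  "is_solution I T p0 cs \<longleftrightarrow> cs \<noteq> [] \<and> hd cs = (I, p0, False) \<and>
     (\<forall>c \<in> set cs. conf_connected c) \<and>
     (\<forall>i. Suc i < length cs \<longrightarrow> step (cs ! i) (cs ! Suc i)) \<and>
     fst (last cs) = T"

definition line_node :: "nat \<Rightarrow> node" where
  "line_node i = (0, 2 * int i)"

end

theory Submission imports Defs begin

text \<open>Let the height of a configuration be the sum of the y-coordinates of all tiles, the
  carried one counted at the agent's position. A move changes it by at most 2 and lifting or
  placing does not change it at all. Shifting the line of n tiles up by m nodes raises the
  height by 2mn, so every solution needs at least mn actions.\<close>

definition induced_edge :: "node set \<Rightarrow> node \<Rightarrow> node \<Rightarrow> bool" where
  "induced_edge S u v \<longleftrightarrow> adj u v \<and> u \<in> S \<and> v \<in> S"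

lemma adj_sym: "adj u v \<Longrightarrow> v \<in> lattice_nodes \<Longrightarrow> adj v u"
  by (cases u; cases v) (auto simp: adj_def directions_def)

lemma symp_induced_edge: "S \<subseteq> lattice_nodes \<Longrightarrow> symp (induced_edge S)"
  by (auto intro!: sympI simp: induced_edge_def adj_sym)

lemma induced_edgeI:
  "even (x + y) \<Longrightarrow> (x' - x, y' - y) \<in> directions \<Longrightarrow> (x, y) \<in> S \<Longrightarrow> (x', y') \<in> S
    \<Longrightarrow> induced_edge S (x, y) (x', y')"
  unfolding induced_edge_def adj_def lattice_nodes_def by force

lemma walk_in_if_rtranclp:
  assumes "(induced_edge S)\<^sup>*\<^sup>* u v" "u \<in> S"
  shows "\<exists>ps. walk_in S ps \<and> hd ps = u \<and> last ps = v"
  using assms(1)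
proof (induction rule: rtranclp_induct)
  case base
  show ?case using assms(2) by (intro exI[of _ "[u]"]) (auto simp: walk_in_def)
next
  case (step y z)
  obtain ps where ps: "walk_in S ps" "hd ps = u" "last ps = y"
    using step.IH by blast
  have last_ps: "ps ! (length ps - 1) = y" and "z \<in> S" "adj y z"
    using ps step(2) by (auto simp: walk_in_def last_conv_nth induced_edge_def)
  then have "walk_in S (ps @ [z])"
    using ps(1) by (auto simp: walk_in_def nth_append less_Suc_eq) (metis One_nat_def diff_Suc_1)
  then show ?case using ps by (intro exI[of _ "ps @ [z]"]) (auto simp: walk_in_def)
qed

lemma conn_setI:
  assumes "S \<subseteq> lattice_nodes" "h \<in> S" "\<And>u. u \<in> S \<Longrightarrow> (induced_edge S)\<^sup>*\<^sup>* u h"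
  shows "conn_set S"
  unfolding conn_set_def
proof (intro conjI ballI)
  fix u v assume "u \<in> S" "v \<in> S"
  have "(induced_edge S)\<^sup>*\<^sup>* h v"
    using assms(3)[OF \<open>v \<in> S\<close>] sympD[OF symp_rtranclp[OF symp_induced_edge[OF assms(1)]]] by blast
  with assms(3)[OF \<open>u \<in> S\<close>] have "(induced_edge S)\<^sup>*\<^sup>* u v" by (rule rtranclp_trans)
  then show "\<exists>ps. walk_in S ps \<and> hd ps = u \<and> last ps = v"
    using walk_in_if_rtranclp \<open>u \<in> S\<close> by blast
qed (use assms(1) in auto)

lemma rtranclp_induced_edge_vertical:
  assumes "even (x + y)" "\<And>j. j \<le> k \<Longrightarrow> (x, y + 2 * int j) \<in> S"
  shows "(induced_edge S)\<^sup>*\<^sup>* (x, y + 2 * int k) (x, y)"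
  using assms(2)
proof (induction k)
  case (Suc k)
  have "induced_edge S (x, y + 2 * int (Suc k)) (x, y + 2 * int k)"
    using assms(1) Suc.prems[of "Suc k"] Suc.prems[of k]
    by (intro induced_edgeI) (auto simp: directions_def)
  then show ?case using Suc by (meson converse_rtranclp_into_rtranclp le_SucI)
qed simp

lemma line_node_lattice: "line_node ` A \<subseteq> lattice_nodes"
  by (auto simp: line_node_def lattice_nodes_def)

lemma conn_set_line_segment:
  assumes "a \<le> b"
  shows "conn_set (line_node ` {a..b})"
proof (rule conn_setI[OF line_node_lattice, of "line_node a"])
  fix u assume "u \<in> line_node ` {a..b}"
  then obtain i where i: "a \<le> i" "i \<le> b" "u = line_node i" by auto
  have "(0, 2 * int a + 2 * int j) \<in> line_node ` {a..b}" if "j \<le> i - a" for j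
    using i that by (intro image_eqI[of _ _ "a + j"]) (auto simp: line_node_def)
  then have "(induced_edge (line_node ` {a..b}))\<^sup>*\<^sup>* (0, 2 * int a + 2 * int (i - a)) (0, 2 * int a)"
    by (intro rtranclp_induced_edge_vertical) auto
  moreover have "(0, 2 * int a + 2 * int (i - a)) = u" "(0, 2 * int a) = line_node a"
    using i by (auto simp: line_node_def of_nat_diff)
  ultimately show "(induced_edge (line_node ` {a..b}))\<^sup>*\<^sup>* u (line_node a)"
    by metis
qed (use assms in simp)

context
  fixes a b :: nat and S :: "node set"
  defines "S \<equiv> lattice_nodes - line_node ` {a..b}"
begin

lemma mem_complement_iff:
  "(x, y) \<in> S \<longleftrightarrow> even (x + y) \<and> \<not> (x = 0 \<and> (\<exists>i\<in>{a..b}. y = 2 * int i))"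
  unfolding S_def lattice_nodes_def line_node_def by auto

lemma complement_column_reach:
  assumes "x \<noteq> 0" "even (x + y)" "even (x + y')"
  shows "(induced_edge S)\<^sup>*\<^sup>* (x, y) (x, y')"
proof -
  have down: "(induced_edge S)\<^sup>*\<^sup>* (x, t) (x, s)"
    if "s \<le> t" "even (x + s)" "even (x + t)" for s t
  proof -
    from that obtain d where "t - s = 2 * d" by (metis evenE even_add even_diff)
    with that(1) have "t = s + 2 * int (nat d)" by simp
    moreover have "(induced_edge S)\<^sup>*\<^sup>* (x, s + 2 * int (nat d)) (x, s)"
      using that(2) assms(1) by (intro rtranclp_induced_edge_vertical) (auto simp: mem_complement_iff)
    ultimately show ?thesis by simp
  qed
  have "S \<subseteq> lattice_nodes" unfolding S_def by blast
  then have sym: "symp (induced_edge S)\<^sup>*\<^sup>*" by (intro symp_rtranclp symp_induced_edge)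
  show ?thesis
  proof (cases "y' \<le> y")
    case True
    then show ?thesis using down assms(2,3) by blast
  next
    case False
    then have "(induced_edge S)\<^sup>*\<^sup>* (x, y') (x, y)" using down assms(2,3) by simp
    then show ?thesis using sympD[OF sym] by blast
  qed
qed

lemma complement_diagonal_right:
  "even (1 + int k + y) \<Longrightarrow> (induced_edge S)\<^sup>*\<^sup>* (1 + int k, y) (1, y + int k)"
proof (induction k arbitrary: y)
  case (Suc k)
  have "induced_edge S (1 + int (Suc k), y) (1 + int k, y + 1)"
    using Suc.prems by (intro induced_edgeI) (auto simp: directions_def mem_complement_iff)
  moreover have "(induced_edge S)\<^sup>*\<^sup>* (1 + int k, y + 1) (1, y + int (Suc k))"
    using Suc.IH[of "y + 1"] Suc.prems by (simp add: algebra_simps)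
  ultimately show ?case by (rule converse_rtranclp_into_rtranclp)
qed simp

lemma complement_diagonal_left:
  "even (-1 - int k + y) \<Longrightarrow> (induced_edge S)\<^sup>*\<^sup>* (-1 - int k, y) (-1, y + int k)"
proof (induction k arbitrary: y)
  case (Suc k)
  have "induced_edge S (-1 - int (Suc k), y) (-1 - int k, y + 1)"
    using Suc.prems by (intro induced_edgeI) (auto simp: directions_def mem_complement_iff)
  moreover have "(induced_edge S)\<^sup>*\<^sup>* (-1 - int k, y + 1) (-1, y + int (Suc k))"
    using Suc.IH[of "y + 1"] Suc.prems by (simp add: algebra_simps)
  ultimately show ?case by (rule converse_rtranclp_into_rtranclp)
qed simp

text \<open>Every node of the complement reaches (1, 1): along a diagonal to the column x = 1 or
  x = -1, vertically inside that column, and from x = -1 around the bottom end of the segment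
  through the origin, which is free because a \<ge> 1.\<close>

lemma complement_reaches_1_1:
  assumes "1 \<le> a" "u \<in> S"
  shows "(induced_edge S)\<^sup>*\<^sup>* u (1, 1)"
proof -
  obtain x y where u: "u = (x, y)" by fastforce
  have even: "even (x + y)" using assms(2) u by (simp add: mem_complement_iff)
  consider "x \<ge> 1" | "x \<le> -1" | "x = 0" by linarith
  then show ?thesis
  proof cases
    case 1
    then have "(induced_edge S)\<^sup>*\<^sup>* (x, y) (1, y + (x - 1))"
      using complement_diagonal_right[of "nat (x - 1)" y] even by simp
    moreover have "(induced_edge S)\<^sup>*\<^sup>* (1, y + (x - 1)) (1, 1)"
      using even by (intro complement_column_reach) auto
    ultimately show ?thesis using u rtranclp_trans by metis
  next
    case 2
    then have "(induced_edge S)\<^sup>*\<^sup>* (x, y) (-1, y + (- x - 1))"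
      using complement_diagonal_left[of "nat (- x - 1)" y] even by simp
    moreover have "(induced_edge S)\<^sup>*\<^sup>* (-1, y + (- x - 1)) (-1, 1)"
      using even by (intro complement_column_reach) auto
    moreover have "induced_edge S (-1, 1) (0, 0)" "induced_edge S (0, 0) (1, 1)"
      using assms(1) by (auto intro!: induced_edgeI simp: directions_def mem_complement_iff)
    ultimately show ?thesis
      using u by (meson rtranclp.rtrancl_into_rtrancl rtranclp_trans)
  next
    case 3
    have "induced_edge S (x, y) (1, y + 1)"
      using assms(2) u 3 even by (intro induced_edgeI) (auto simp: directions_def mem_complement_iff)
    moreover have "(induced_edge S)\<^sup>*\<^sup>* (1, y + 1) (1, 1)"
      using even 3 by (intro complement_column_reach) auto
    ultimately show ?thesis using u by (meson converse_rtranclp_into_rtranclp)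
  qed
qed

lemma simply_conn_line_segment:
  assumes "1 \<le> a"
  shows "simply_conn (line_node ` {a..b})"
  unfolding simply_conn_def S_def[symmetric]
proof (rule conn_setI[of S "(1, 1)"])
  show "S \<subseteq> lattice_nodes" "(1, 1) \<in> S"
    by (auto simp: S_def lattice_nodes_def line_node_def)
qed (use complement_reaches_1_1 assms in blast)

end

lemma inj_line_node: "inj line_node"
  by (auto simp: inj_def line_node_def)

lemma card_line_node_image: "card (line_node ` A) = card A"
  using card_image[OF inj_on_subset[OF inj_line_node]] by blast

lemma line_instance:
  assumes "1 \<le> m" "m < n"
  defines "I \<equiv> line_node ` {1..n}" and "T \<equiv> line_node ` {m+1..n+m}"
  shows "valid_instance I T (line_node n)" "card (I - T) = m"
proof -
  have "I \<inter> T = line_node ` {m+1..n}"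
    using assms(2) unfolding I_def T_def image_Int[OF inj_line_node, symmetric] by auto
  then show "valid_instance I T (line_node n)"
    using assms conn_set_line_segment[of 1 n] conn_set_line_segment[of "m+1" "n+m"]
      conn_set_line_segment[of "m+1" n]
    by (auto simp: valid_instance_def I_def T_def card_line_node_image)
  have "I - T = line_node ` {1..m}"
    using assms(2) unfolding I_def T_def image_set_diff[OF inj_line_node, symmetric] by auto
  then show "card (I - T) = m" by (simp add: card_line_node_image)
qed

definition height :: "config \<Rightarrow> int" where
  "height c = (case c of (C, p, b) \<Rightarrow> (\<Sum>q\<in>C. snd q) + (if b then snd p else 0))"

definition tile_count :: "config \<Rightarrow> nat" where
  "tile_count c = (case c of (C, p, b) \<Rightarrow> card C + (if b then 1 else 0))"

lemma adj_snd_diff: "adj p p' \<Longrightarrow> \<bar>snd p' - snd p\<bar> \<le> 2"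
  by (cases p; cases p') (auto simp: adj_def directions_def)

lemma step_invariants:
  assumes "step c c'" "finite (fst c)"
  shows "finite (fst c') \<and> tile_count c' = tile_count c \<and> \<bar>height c' - height c\<bar> \<le> 2"
proof -
  obtain C p b C' p' b' where c: "c = (C, p, b)" and c': "c' = (C', p', b')"
    by (cases c; cases c') auto
  have fin: "finite C" using assms(2) c by simp
  from assms(1) consider
      (move) "C' = C" "b' = b" "adj p p'"
    | (lift) "p' = p" "p \<in> C" "\<not> b" "C' = C - {p}" "b'"
    | (place) "p' = p" "p \<notin> C" "b" "C' = insert p C" "\<not> b'"
    unfolding step_def c c' by auto
  then show ?thesis
  proof cases
    case move
    then show ?thesis using fin adj_snd_diff[of p p'] by (auto simp: c c' height_def tile_count_def)
  next
    case lift
    then have "card C \<ge> 1" "sum snd C = snd p + sum snd (C - {p})"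
      using fin by (auto simp: Suc_le_eq card_gt_0_iff sum.remove)
    then show ?thesis using lift fin by (auto simp: c c' height_def tile_count_def)
  next
    case place
    then show ?thesis using fin by (auto simp: c c' height_def tile_count_def)
  qed
qed

lemma solution_height_bound:
  assumes sol: "is_solution I T p0 cs" and "finite I" and "card T = card I"
  shows "\<bar>sum snd T - sum snd I\<bar> \<le> 2 * int (length cs - 1)"
proof -
  have "cs \<noteq> []" and first: "cs ! 0 = (I, p0, False)"
    using sol by (auto simp: is_solution_def hd_conv_nth)
  have inv: "finite (fst (cs ! k)) \<and> tile_count (cs ! k) = card I
      \<and> \<bar>height (cs ! k) - height (cs ! 0)\<bar> \<le> 2 * int k" if "k < length cs" for k
    using that
  proof (induction k)
    case 0
    then show ?case using first \<open>finite I\<close> by (simp add: tile_count_def)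
  next
    case (Suc k)
    then have "step (cs ! k) (cs ! Suc k)" using sol by (auto simp: is_solution_def)
    with Suc show ?case using step_invariants by fastforce
  qed
  define k where "k = length cs - 1"
  obtain p b where final: "cs ! k = (T, p, b)"
    using sol \<open>cs \<noteq> []\<close> by (metis is_solution_def last_conv_nth k_def prod.collapse)
  have "k < length cs" using \<open>cs \<noteq> []\<close> by (simp add: k_def)
  with inv[of k] final assms(3) have "\<not> b" "\<bar>height (T, p, b) - height (cs ! 0)\<bar> \<le> 2 * int k"
    by (auto simp: tile_count_def)
  then show ?thesis using first by (simp add: height_def k_def)
qed

lemma sum_snd_line_node: "sum snd (line_node ` A) = 2 * (\<Sum>i\<in>A. int i)"
  using sum.reindex[OF inj_on_subset[OF inj_line_node, of A], of snd]
  by (simp add: o_def line_node_def sum_distrib_left)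

lemma sum_snd_line_shift:
  "sum snd (line_node ` {m+1..n+m}) - sum snd (line_node ` {1..n}) = 2 * int m * int n"
proof -
  have "(\<Sum>i=m+1..n+m. int i) = (\<Sum>i=1..n. int i + int m)"
    using sum.shift_bounds_cl_nat_ivl[of int 1 m n] by (simp add: add.commute)
  then show ?thesis by (simp add: sum_snd_line_node sum.distrib algebra_simps)
qed

theorem mainTheorem2:
  shows "\<exists>c::real. c > 0 \<and>
    (\<forall>n m :: nat. 1 \<le> m \<and> m < n \<longrightarrow>
      (let I = line_node ` {1..n}; T = line_node ` {m+1..n+m}; p0 = line_node n in
        valid_instance I T p0 \<and> card I = n \<and> card T = n \<and> card (I - T) = m \<and>
        simply_conn I \<and> simply_conn T \<and>
        (\<forall>cs. is_solution I T p0 cs \<longrightarrow> real (length cs - 1) \<ge> c * real m * real n)))"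
proof (intro exI[of _ 1] conjI allI impI)
  fix n m :: nat
  assume nm: "1 \<le> m \<and> m < n"
  let ?I = "line_node ` {1..n}" and ?T = "line_node ` {m+1..n+m}"
  have "real m * real n \<le> real (length cs - 1)" if "is_solution ?I ?T (line_node n) cs" for cs
  proof -
    have "2 * (int m * int n) \<le> 2 * int (length cs - 1)"
      using solution_height_bound[OF that] sum_snd_line_shift[of m n]
      by (simp add: card_line_node_image)
    then show ?thesis by (metis mult_le_cancel_left_pos of_nat_le_iff of_nat_mult zero_less_numeral)
  qed
  then show "let I = ?I; T = ?T; p0 = line_node n in
      valid_instance I T p0 \<and> card I = n \<and> card T = n \<and> card (I - T) = m \<and>
      simply_conn I \<and> simply_conn T \<and>
      (\<forall>cs. is_solution I T p0 cs \<longrightarrow> real (length cs - 1) \<ge> 1 * real m * real n)"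
    using nm line_instance[of m n] simply_conn_line_segment[of 1 n]
      simply_conn_line_segment[of "m+1" "n+m"]
    by (simp add: Let_def card_line_node_image)
qed simp

end
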